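(* Let $\mathcal F$ be a family of finite graphs and let $\mathrm{Forb}^+_{T_{\mathrm{Graph}}}(\mathcal F)$ be the theory of all graphs that contain no non-induced copy of any member of $\mathcal F$. For the axiom-adding interpretation $I^+_{\mathcal F}\colon T_{\mathrm{Graph}}\leadsto\mathrm{Forb}^+_{T_{\mathrm{Graph}}}(\mathcal F)$ (acting identically on $E$), we have $$\chi(I^+_{\mathcal F})=\max\{\chi(\mathcal F),1\},$$ where $\chi(\mathcal F)=\inf\{\chi(F):F\in\mathcal F\}$ (the infimum of the usual chromatic numbers, $\inf\varnothing=\infty$).
   Context: A graph $G$ contains a non-induced copy of $F$ ($F\subseteq G$) if there is an injection $V(F)\to V(G)$ mapping edges to edges. For the interpretation $I=I^+_{\mathcal F}$ and $T=\mathrm{Forb}^+_{T_{\mathrm{Graph}}}(\mathcal F)$, $I(N)=N$ and the abstract chromatic number is $\chi(I)=\sup(\{\ell\in\mathbb{N}_+:\forall n\in\mathbb{N}\ \exists N\in\mathcal M_n[T],\ T_{n,\ell}\subseteq I(N)\}\cup\{0\})+1$, where $\mathcal M_n[T]$ is the set of $n$-vertex models of $T$ up to isomorphism and $T_{n,\ell}$ is the complete $\ell$-partite graph on $n$ vertices with parts of sizes $\lfloor n/\ell\rfloor$ or $\lceil n/\ell\rceil$. *)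

theory Defs
  imports Main "HOL-Library.Extended_Nat"
begin

text \<open>A finite (simple) graph is represented up to isomorphism as a pair (n, E):
  vertex set {0..<n}, edge relation E symmetric, irreflexive and supported on {0..<n}.\<close>
type_synonym graph = "nat \<times> (nat \<Rightarrow> nat \<Rightarrow> bool)"

definition is_graph :: "graph \<Rightarrow> bool" where
  "is_graph G = ((\<forall>i j. snd G i j \<longrightarrow> i < fst G \<and> j < fst G \<and> i \<noteq> j)
                 \<and> (\<forall>i j. snd G i j \<longrightarrow> snd G j i))"

definition subgraph :: "graph \<Rightarrow> graph \<Rightarrow> bool" where
  "subgraph F G = (\<exists>f. inj_on f {0..<fst F} \<and> f ` {0..<fst F} \<subseteq> {0..<fst G}
                      \<and> (\<forall>i j. snd F i j \<longrightarrow> snd G (f i) (f j)))"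

definition forb_model :: "graph set \<Rightarrow> graph \<Rightarrow> bool" where
  "forb_model \<F> G = (is_graph G \<and> (\<forall>F\<in>\<F>. \<not> subgraph F G))"

definition is_turan :: "graph \<Rightarrow> nat \<Rightarrow> nat \<Rightarrow> bool" where
  "is_turan T n l = (fst T = n \<and>
     (\<exists>p. (\<forall>i<n. p i < l)
        \<and> (\<forall>k<l. card {i. i < n \<and> p i = k} \<in> {n div l, nat \<lceil>real n / real l\<rceil>})
        \<and> (\<forall>i j. snd T i j = (i < n \<and> j < n \<and> p i \<noteq> p j))))"

definition chromatic_number :: "graph \<Rightarrow> nat" where
  "chromatic_number G = (LEAST k. \<exists>c. (\<forall>i<fst G. c i < k) \<and> (\<forall>i j. snd G i j \<longrightarrow> c i \<noteq> c j))"

definition family_chi :: "graph set \<Rightarrow> enat" where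
  "family_chi \<F> = (INF F\<in>\<F>. enat (chromatic_number F))"

text \<open>Abstract chromatic number of I^+_\<F> (with I(N) = N).\<close>
definition abstract_chi :: "graph set \<Rightarrow> enat" where
  "abstract_chi \<F> = Sup ({enat l | l. l > 0 \<and>
      (\<forall>n. \<exists>N. fst N = n \<and> forb_model \<F> N \<and> (\<exists>T. is_turan T n l \<and> subgraph T N))} \<union> {0}) + 1"

end

theory Submission
  imports Defs
begin

text \<open>A properly \<open>l\<close>-coloured graph \<open>F\<close> embeds into the Turan graph on \<open>|F| \<cdot> l\<close> vertices,
  whose \<open>l\<close> parts all have \<open>|F|\<close> vertices: send vertex \<open>i\<close> to the \<open>i\<close>-th vertex of the part
  indexed by its colour.  Conversely the part labelling of a Turan graph with \<open>l\<close> parts pulls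
  back to a proper \<open>l\<close>-colouring of each of its subgraphs.  So models of \<open>Forb\<^sup>+(\<F>)\<close> containing
  \<open>T\<^sub>n\<^sub>,\<^sub>l\<close> exist for all \<open>n\<close> iff \<open>l < \<chi>(F)\<close> for every \<open>F \<in> \<F>\<close> (the Turan graphs themselves
  then serve as models), and the theorem reduces to arithmetic in \<open>enat\<close>.\<close>

lemma card_residue_class:
  assumes "l > 0" and "k < l"
  shows "card {i. i < n \<and> i mod l = k} = n div l + (if k < n mod l then 1 else 0)"
proof (induction n)
  case 0
  then show ?case by simp
next
  case (Suc n)
  have "{i. i < Suc n \<and> i mod l = k} = {i. i < n \<and> i mod l = k} \<union> (if n mod l = k then {n} else {})"
    by (auto simp: less_Suc_eq)
  then have "card {i. i < Suc n \<and> i mod l = k}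
      = card {i. i < n \<and> i mod l = k} + (if n mod l = k then 1 else 0)"
    by auto
  also have "\<dots> = Suc n div l + (if k < Suc n mod l then 1 else 0)"
    using Suc.IH assms mod_less_divisor[OF assms(1), of n] by (auto simp: div_Suc mod_Suc)
  finally show ?case .
qed

lemma nat_ceiling_real_divide:
  assumes "l > 0"
  shows "nat \<lceil>real n / real l\<rceil> = n div l + (if n mod l = 0 then 0 else 1)"
proof -
  have "\<lceil>real n / real l\<rceil> = - (- int n div int l)"
    using ceiling_divide_eq_div[of "int n" "int l"] by simp
  also have "\<dots> = int (n div l + (if n mod l = 0 then 0 else 1))"
    using assms by (smt (verit, ccfv_threshold) div_minus_minus neq0_conv of_nat_1
        of_nat_add of_nat_eq_0_iff zdiv_int zdiv_zminus2_eq_if zmod_int)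
  finally show ?thesis by simp
qed

lemma is_turan_residue_classes:
  assumes "l > 0"
  shows "is_turan (n, \<lambda>i j. i < n \<and> j < n \<and> i mod l \<noteq> j mod l) n l"
  unfolding is_turan_def
proof (intro conjI exI[of _ "\<lambda>i. i mod l"] allI impI)
  fix k assume "k < l"
  then show "card {i. i < n \<and> i mod l = k} \<in> {n div l, nat \<lceil>real n / real l\<rceil>}"
    using card_residue_class[OF assms] nat_ceiling_real_divide[OF assms, of n] by auto
qed (use assms in auto)

lemma subgraph_refl: "subgraph G G"
  unfolding subgraph_def by (intro exI[of _ id]) auto

lemma subgraph_trans:
  assumes "subgraph A B" and "subgraph B C"
  shows "subgraph A C"
proof -
  obtain f where f: "inj_on f {0..<fst A}" "f ` {0..<fst A} \<subseteq> {0..<fst B}"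
    "\<forall>i j. snd A i j \<longrightarrow> snd B (f i) (f j)"
    using assms(1) unfolding subgraph_def by blast
  obtain g where g: "inj_on g {0..<fst B}" "g ` {0..<fst B} \<subseteq> {0..<fst C}"
    "\<forall>i j. snd B i j \<longrightarrow> snd C (g i) (g j)"
    using assms(2) unfolding subgraph_def by blast
  have "inj_on (g \<circ> f) {0..<fst A}"
    using f g by (meson comp_inj_on inj_on_subset)
  moreover have "(g \<circ> f) ` {0..<fst A} \<subseteq> {0..<fst C}"
    using f(2) g(2) by (auto simp: image_subset_iff)
  ultimately show ?thesis
    unfolding subgraph_def using f(3) g(3) by (intro exI[of _ "g \<circ> f"]) auto
qed

lemma chromatic_number_colouring:
  assumes "is_graph G"
  obtains c where "\<forall>i<fst G. c i < chromatic_number G" and "\<forall>i j. snd G i j \<longrightarrow> c i \<noteq> c j"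
proof -
  let ?colourable = "\<lambda>k. \<exists>c. (\<forall>i<fst G. c i < k) \<and> (\<forall>i j. snd G i j \<longrightarrow> c i \<noteq> c j)"
  have "?colourable (fst G)"
    using assms unfolding is_graph_def by (intro exI[of _ id]) auto
  then have "?colourable (chromatic_number G)"
    unfolding chromatic_number_def by (rule LeastI)
  then show ?thesis using that by blast
qed

lemma chromatic_number_le:
  assumes "\<forall>i<fst G. c i < k" and "\<forall>i j. snd G i j \<longrightarrow> c i \<noteq> c j"
  shows "chromatic_number G \<le> k"
  unfolding chromatic_number_def using assms by (intro Least_le) blast

lemma chromatic_number_le_if_subgraph_turan:
  assumes "is_turan T n l" and "subgraph F T"
  shows "chromatic_number F \<le> l"
proof -
  obtain p where p: "\<forall>i<n. p i < l" "\<forall>i j. snd T i j = (i < n \<and> j < n \<and> p i \<noteq> p j)"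
    and n: "fst T = n"
    using assms(1) unfolding is_turan_def by blast
  obtain f where f: "f ` {0..<fst F} \<subseteq> {0..<n}" "\<forall>i j. snd F i j \<longrightarrow> snd T (f i) (f j)"
    using assms(2) n unfolding subgraph_def by blast
  show ?thesis
  proof (rule chromatic_number_le[of F "p \<circ> f"])
    show "\<forall>i<fst F. (p \<circ> f) i < l"
      using f(1) p(1) by (auto simp: image_subset_iff)
    show "\<forall>i j. snd F i j \<longrightarrow> (p \<circ> f) i \<noteq> (p \<circ> f) j"
      using f(2) p(2) by auto
  qed
qed

lemma subgraph_turan_if_colourable:
  assumes F: "is_graph F" and "chromatic_number F \<le> l" and l: "l > 0"
    and T: "is_turan T (fst F * l) l"
  shows "subgraph F T"
proof -
  define m where "m = fst F"
  obtain c where c: "\<forall>i<m. c i < l" "\<forall>i j. snd F i j \<longrightarrow> c i \<noteq> c j"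
    using chromatic_number_colouring[OF F] assms(2) unfolding m_def
    by (metis order_less_le_trans)
  obtain p where p: "\<forall>k<l. card {i. i < m * l \<and> p i = k} \<in> {m * l div l, nat \<lceil>real (m * l) / real l\<rceil>}"
    "\<forall>i j. snd T i j = (i < m * l \<and> j < m * l \<and> p i \<noteq> p j)" and n: "fst T = m * l"
    using T unfolding is_turan_def m_def by blast
  have "card {i. i < m * l \<and> p i = k} = m" if "k < l" for k
    using p(1) that l by simp
  then have "\<exists>h. bij_betw h {0..<m} {i. i < m * l \<and> p i = k}" if "k < l" for k
    using that ex_bij_betw_nat_finite[of "{i. i < m * l \<and> p i = k}"] by auto
  then obtain H where H: "\<And>k. k < l \<Longrightarrow> bij_betw (H k) {0..<m} {i. i < m * l \<and> p i = k}"
    by metis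
  define f where "f i = H (c i) i" for i
  have f: "f i < m * l \<and> p (f i) = c i" if "i < m" for i
    using H[of "c i"] c(1) that unfolding f_def bij_betw_def by auto
  have "inj_on f {0..<m}"
  proof (rule inj_onI)
    fix x y assume xy: "x \<in> {0..<m}" "y \<in> {0..<m}" "f x = f y"
    then have "c x = c y"
      using f[of x] f[of y] by simp
    then show "x = y"
      using xy H[of "c x"] c(1) unfolding f_def bij_betw_def inj_on_def by auto
  qed
  moreover have "snd T (f i) (f j)" if "snd F i j" for i j
  proof -
    have "i < m" "j < m"
      using F that unfolding is_graph_def m_def by auto
    then show ?thesis
      using f p(2) c(2) that by auto
  qed
  ultimately show ?thesis
    unfolding subgraph_def using f n m_def by (intro exI[of _ f]) auto
qed

lemma forb_models_contain_turan_iff: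
  assumes graphs: "\<forall>F\<in>\<F>. is_graph F" and l: "l > 0"
  shows "(\<forall>n. \<exists>N. fst N = n \<and> forb_model \<F> N \<and> (\<exists>T. is_turan T n l \<and> subgraph T N))
    \<longleftrightarrow> (\<forall>F\<in>\<F>. l < chromatic_number F)"
proof
  assume models: "\<forall>n. \<exists>N. fst N = n \<and> forb_model \<F> N \<and> (\<exists>T. is_turan T n l \<and> subgraph T N)"
  show "\<forall>F\<in>\<F>. l < chromatic_number F"
  proof (intro ballI not_le_imp_less notI)
    fix F assume F: "F \<in> \<F>" and "chromatic_number F \<le> l"
    obtain N T where "forb_model \<F> N" "is_turan T (fst F * l) l" "subgraph T N"
      using models by blast
    then show False
      using subgraph_turan_if_colourable \<open>chromatic_number F \<le> l\<close> graphs F l subgraph_trans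
      unfolding forb_model_def by blast
  qed
next
  assume chi: "\<forall>F\<in>\<F>. l < chromatic_number F"
  show "\<forall>n. \<exists>N. fst N = n \<and> forb_model \<F> N \<and> (\<exists>T. is_turan T n l \<and> subgraph T N)"
  proof
    fix n
    define T where "T = (n, \<lambda>i j. i < n \<and> j < n \<and> i mod l \<noteq> j mod l)"
    have "is_turan T n l"
      using is_turan_residue_classes[OF l] T_def by simp
    moreover have "forb_model \<F> T"
      unfolding forb_model_def
      using chi chromatic_number_le_if_subgraph_turan[OF \<open>is_turan T n l\<close>]
      by (auto simp: T_def is_graph_def not_le[symmetric])
    ultimately show "\<exists>N. fst N = n \<and> forb_model \<F> N \<and> (\<exists>T. is_turan T n l \<and> subgraph T N)"
      using subgraph_refl T_def by (intro exI[of _ T]) auto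
  qed
qed

lemma Sup_enat_Suc_le_plus_one:
  fixes c :: enat
  shows "Sup ({enat l | l. 0 < l \<and> enat (Suc l) \<le> c} \<union> {0}) + 1 = max c 1"
proof (cases c)
  case (enat m)
  then have "{enat l | l. 0 < l \<and> enat (Suc l) \<le> c} \<union> {0} = enat ` {..m - 1}"
    by (auto simp: image_iff zero_enat_def)
  moreover have "Sup (enat ` {..k}) = enat k" for k
    by (rule antisym) (auto intro: Sup_least Sup_upper)
  ultimately show ?thesis
    using enat by (auto simp: one_enat_def)
next
  case infinity
  then have "{enat l | l. 0 < l \<and> enat (Suc l) \<le> c} \<union> {0} = range enat"
    by (auto simp: image_iff zero_enat_def)
  moreover have "Sup (range enat) = \<infinity>"
    by (metis Sup_eq_top_iff enat_ord_simps(2) gt_ex less_infinityE range_eqI top_enat_def)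
  ultimately show ?thesis
    using infinity by simp
qed

theorem proposition8p1:
  fixes \<F> :: "graph set"
  assumes "\<forall>F\<in>\<F>. is_graph F"
  shows "abstract_chi \<F> = max (family_chi \<F>) 1"
proof -
  have "enat (Suc l) \<le> family_chi \<F> \<longleftrightarrow> (\<forall>F\<in>\<F>. l < chromatic_number F)" for l
    unfolding family_chi_def le_INF_iff by (simp add: Suc_le_eq)
  then have "(0 < l \<and> (\<forall>n. \<exists>N. fst N = n \<and> forb_model \<F> N \<and> (\<exists>T. is_turan T n l \<and> subgraph T N)))
      \<longleftrightarrow> (0 < l \<and> enat (Suc l) \<le> family_chi \<F>)" for l
    using forb_models_contain_turan_iff[OF assms, of l] by blast
  then show ?thesis
    unfolding abstract_chi_def by (simp only: Sup_enat_Suc_le_plus_one)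
qed

end
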